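(* Let $\Gamma$ be a finite abelian group, $\sigma\colon\Gamma\times\Gamma\to\mathbb{C}^\times$ a symmetric nondegenerate bimultiplicative form, $\varepsilon\in\{\pm1\}$, $q\colon\Gamma\to\mathbb{C}^\times$ a quadratic form with $\sigma(a,b)=q(a+b)q(a)^{-1}q(b)^{-1}$, $\alpha\in\mathbb{C}$ with $\alpha^2=\varepsilon|\Gamma|^{-1/2}\sum_{a\in\Gamma}q(a)^{-1}$, and $\beta\in\{\alpha^{-1},-\alpha^{-1}\}$. Consider the $\mathbb{Z}_2$-crossed ribbon fusion category $\mathcal{TY}(\Gamma,\sigma,\varepsilon\,|\,q,\alpha,\beta)$ described in the context. Then the quantum dimensions of all simple objects of $\mathcal{TY}(\Gamma,\sigma,\varepsilon\,|\,q,\alpha,\beta)$ coincide with their Frobenius–Perron dimensions if and only if $\alpha\beta=\varepsilon$.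
   Context: The Tambara–Yamagami category $\mathcal{TY}(\Gamma,\sigma,\varepsilon)$ is the semisimple $\mathbb{Z}_2$-graded fusion category $\operatorname{Vect}_\Gamma\oplus\operatorname{Vect}$ with simple objects $\mathbb{C}_a$ ($a\in\Gamma$, degree $0$) and $\mathsf{X}$ (degree $1$), fusion rules $\mathbb{C}_a\otimes\mathbb{C}_b=\mathbb{C}_{a+b}$, $\mathbb{C}_a\otimes\mathsf{X}=\mathsf{X}\otimes\mathbb{C}_a=\mathsf{X}$, $\mathsf{X}\otimes\mathsf{X}=\bigoplus_{t\in\Gamma}\mathbb{C}_t$, and with the only nontrivial associators: $(\mathbb{C}_a\otimes\mathsf{X})\otimes\mathbb{C}_b\to\mathbb{C}_a\otimes(\mathsf{X}\otimes\mathbb{C}_b)$ is the scalar $\sigma(a,b)$; $(\mathsf{X}\otimes\mathbb{C}_a)\otimes\mathsf{X}\to\mathsf{X}\otimes(\mathbb{C}_a\otimes\mathsf{X})$ is $\sigma(a,t)$ on the summand $\mathbb{C}_t$; $(\mathsf{X}\otimes\mathsf{X})\otimes\mathsf{X}=\bigoplus_{t\in\Gamma}\mathsf{X}\to\bigoplus_{r\in\Gamma}\mathsf{X}=\mathsf{X}\otimes(\mathsf{X}\otimes\mathsf{X})$ is the matrix with entries $\varepsilon|\Gamma|^{-1/2}\sigma(t,r)^{-1}$. Rigid structure: $\mathbb{C}_a^*=\mathbb{C}_{-a}$ with obvious (co)evaluations, $\mathsf{X}^*=\mathsf{X}$, $\mathrm{coev}_\mathsf{X}$ the inclusion of $\mathbb{C}_0$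 into $\mathsf{X}\otimes\mathsf{X}$, $\mathrm{ev}_\mathsf{X}=\varepsilon|\Gamma|^{1/2}$ times the projection onto $\mathbb{C}_0$. The group $\mathbb{Z}_2=\langle g\rangle$ acts strictly by $g_*\mathbb{C}_a=\mathbb{C}_{-a}$, $g_*\mathsf{X}=\mathsf{X}$ with trivial tensor and composition structures. The $\mathbb{Z}_2$-crossed braiding is $c_{\mathbb{C}_a,\mathbb{C}_b}=\sigma(a,b)$, $c_{\mathbb{C}_a,\mathsf{X}}=q(a)^{-1}$, $c_{\mathsf{X},\mathbb{C}_a}\colon\mathsf{X}\otimes\mathbb{C}_a\to\mathbb{C}_{-a}\otimes\mathsf{X}$ equal to $q(a)^{-1}$, and $c_{\mathsf{X},\mathsf{X}}=\alpha\,q(t)$ on the summand $\mathbb{C}_t$. The $\mathbb{Z}_2$-ribbon twist is $\theta_{\mathbb{C}_a}=q(a)^2$, $\theta_\mathsf{X}=\beta$. These data define the $\mathbb{Z}_2$-crossed ribbon category $\mathcal{TY}(\Gamma,\sigma,\varepsilon\,|\,q,\alpha,\beta)$. The quantum dimension of a simple object $Y$ is $\mathrm{ev}_Y\circ c_{Y,Y^*}\circ(\theta_Y\otimes\mathrm{id}_{Y^*})\circ\mathrm{coev}_Y$. The Frobenius–Perron dimensions are $1$ for each $\mathbb{C}_a$ and $|\Gamma|^{1/2}$ for $\mathsf{X}$. *)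

theory Defs
  imports Complex_Main
begin

text \<open>Simple objects: C a (a in Gamma, degree 0) and X (degree 1).
  The finite abelian group Gamma is the type 'g.\<close>

datatype 'g simple = C 'g | X

text \<open>A fixed enumeration of the finite group Gamma (used to order the summands of X (x) X).\<close>
definition gelems :: "'g::finite list" where
  "gelems = (SOME xs. distinct xs \<and> set xs = UNIV)"

text \<open>Semisimple objects are represented as direct sums of simples (lists of simples);
  a morphism A -> B is a matrix M with M i j the component from the j-th summand of A
  to the i-th summand of B.\<close>

type_synonym mor = "nat \<Rightarrow> nat \<Rightarrow> complex"

definition mcomp :: "'g simple list \<Rightarrow> mor \<Rightarrow> mor \<Rightarrow> mor" where
  "mcomp mid M N = (\<lambda>i k. \<Sum>j<length mid. M i j * N j k)"

fun tens :: "'g::{finite,ab_group_add} simple \<Rightarrow> 'g simple \<Rightarrow> 'g simple list" where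
  "tens (C a) (C b) = [C (a + b)]"
| "tens (C a) X = [X]"
| "tens X (C a) = [X]"
| "tens X X = map C gelems"

fun dual :: "'g::ab_group_add simple \<Rightarrow> 'g simple" where
  "dual (C a) = C (- a)"
| "dual X = X"

text \<open>Action of the generator g of Z2: g_* C a = C (-a), g_* X = X.\<close>
fun gact :: "'g::ab_group_add simple \<Rightarrow> 'g simple" where
  "gact (C a) = C (- a)"
| "gact X = X"

text \<open>Target of the crossed braiding c_{Y,Z} : Y (x) Z -> (deg Y)_* Z (x) Y.\<close>
fun braid_tgt :: "'g::{finite,ab_group_add} simple \<Rightarrow> 'g simple \<Rightarrow> 'g simple list" where
  "braid_tgt (C a) Z = tens Z (C a)"
| "braid_tgt X Z = tens (gact Z) X"

fun braid :: "('g \<Rightarrow> 'g \<Rightarrow> complex) \<Rightarrow> ('g \<Rightarrow> complex) \<Rightarrow> complex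
    \<Rightarrow> 'g::{finite,ab_group_add} simple \<Rightarrow> 'g simple \<Rightarrow> mor" where
  "braid \<sigma> q \<alpha> (C a) (C b) = (\<lambda>i j. if i = 0 \<and> j = 0 then \<sigma> a b else 0)"
| "braid \<sigma> q \<alpha> (C a) X = (\<lambda>i j. if i = 0 \<and> j = 0 then inverse (q a) else 0)"
| "braid \<sigma> q \<alpha> X (C a) = (\<lambda>i j. if i = 0 \<and> j = 0 then inverse (q a) else 0)"
| "braid \<sigma> q \<alpha> X X = (\<lambda>i j. if i = j \<and> i < length (gelems::'g list)
                                  then \<alpha> * q (gelems ! i) else 0)"

fun twist :: "('g \<Rightarrow> complex) \<Rightarrow> complex \<Rightarrow> 'g simple \<Rightarrow> complex" where
  "twist q \<beta> (C a) = q a ^ 2"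
| "twist q \<beta> X = \<beta>"

definition twist_id :: "('g \<Rightarrow> complex) \<Rightarrow> complex \<Rightarrow> 'g::{finite,ab_group_add} simple \<Rightarrow> mor" where
  "twist_id q \<beta> Y = (\<lambda>i j. if i = j \<and> i < length (tens Y (dual Y)) then twist q \<beta> Y else 0)"

definition coev :: "'g::{finite,ab_group_add} simple \<Rightarrow> mor" where
  "coev Y = (\<lambda>i j. if j = 0 \<and> i < length (tens Y (dual Y)) \<and> tens Y (dual Y) ! i = C 0
                   then 1 else 0)"

definition ev :: "complex \<Rightarrow> 'g::{finite,ab_group_add} simple \<Rightarrow> mor" where
  "ev \<epsilon> Y = (\<lambda>i j. if i = 0 \<and> j < length (tens (dual Y) Y) \<and> tens (dual Y) Y ! j = C 0
                   then (if Y = X then \<epsilon> * complex_of_real (sqrt (real (card (UNIV :: 'g set)))) else 1)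
                   else 0)"

text \<open>Quantum dimension: ev_Y o c_{Y,Y*} o (theta_Y (x) id_{Y*}) o coev_Y, a scalar
  (the unique matrix entry of an endomorphism of the unit object C 0).\<close>
definition qdim :: "('g \<Rightarrow> 'g \<Rightarrow> complex) \<Rightarrow> complex \<Rightarrow> ('g \<Rightarrow> complex) \<Rightarrow> complex \<Rightarrow> complex
    \<Rightarrow> 'g::{finite,ab_group_add} simple \<Rightarrow> complex" where
  "qdim \<sigma> \<epsilon> q \<alpha> \<beta> Y =
     mcomp (braid_tgt Y (dual Y)) (ev \<epsilon> Y)
       (mcomp (tens Y (dual Y)) (braid \<sigma> q \<alpha> Y (dual Y))
          (mcomp (tens Y (dual Y)) (twist_id q \<beta> Y) (coev Y))) 0 0"

fun fpdim :: "'g::finite simple \<Rightarrow> real" where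
  "fpdim (C a) = 1"
| "fpdim X = sqrt (real (card (UNIV :: 'g set)))"

end

theory Submission
  imports Defs
begin

text \<open>Every quantum dimension is computed by following the unit summand \<open>C 0\<close> through the
  composite \<open>ev \<circ> c \<circ> (\<theta> \<otimes> id) \<circ> coev\<close>. For \<open>C a\<close> this gives \<open>\<sigma>(a,-a) q(a)\<^sup>2 = 1\<close>, because
  \<open>q\<close> is an even quadratic form refining \<open>\<sigma>\<close>. For \<open>X\<close> it gives \<open>\<epsilon> |\<Gamma>|\<^sup>1\<^sup>/\<^sup>2 \<alpha> q(0) \<beta>\<close> with
  \<open>q(0) = 1\<close>, which equals the Frobenius-Perron dimension \<open>|\<Gamma>|\<^sup>1\<^sup>/\<^sup>2\<close> iff \<open>\<alpha>\<beta> = \<epsilon>\<close>.\<close>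

lemma distinct_gelems: "distinct (gelems :: 'g::finite list)"
  and set_gelems: "set (gelems :: 'g list) = UNIV"
proof -
  obtain xs :: "'g list" where "distinct xs \<and> set xs = UNIV"
    using finite_distinct_list[OF finite_UNIV] by metis
  then have "distinct (gelems :: 'g list) \<and> set (gelems :: 'g list) = UNIV"
    unfolding gelems_def by (rule someI)
  then show "distinct (gelems :: 'g list)" "set (gelems :: 'g list) = UNIV"
    by simp_all
qed

lemma mcomp_single_column:
  assumes "k < length mid"
    and "\<And>j. j < length mid \<Longrightarrow> N j l = (if j = k then c else 0)"
  shows "mcomp mid M N i l = M i k * c"
proof -
  have "mcomp mid M N i l = (\<Sum>j<length mid. if j = k then M i k * c else 0)"
    unfolding mcomp_def using assms(2) by (intro sum.cong) auto
  also have "\<dots> = M i k * c"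
    using assms(1) by simp
  finally show ?thesis .
qed

lemma qdim_C: "qdim \<sigma> \<epsilon> q \<alpha> \<beta> (C a) = \<sigma> a (- a) * q a ^ 2"
  by (simp add: qdim_def mcomp_def ev_def coev_def twist_id_def)

lemma qdim_X:
  fixes \<sigma> :: "'g::{finite,ab_group_add} \<Rightarrow> 'g \<Rightarrow> complex"
  shows "qdim \<sigma> \<epsilon> q \<alpha> \<beta> X
    = \<epsilon> * complex_of_real (sqrt (real (card (UNIV :: 'g set)))) * \<alpha> * q 0 * \<beta>"
proof -
  let ?G = "gelems :: 'g list"
  let ?X = "X :: 'g simple"
  let ?XX = "tens ?X (dual ?X)"
  obtain k where k: "k < length ?G" "?G ! k = 0"
    using set_gelems by (metis UNIV_I in_set_conv_nth)
  have k_unique: "?G ! j = 0 \<longleftrightarrow> j = k" if "j < length ?G" for j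
    using that k distinct_gelems nth_eq_iff_index_eq by metis
  have k_XX: "k < length ?XX"
    using k(1) by simp
  have coev_col: "coev ?X j 0 = (if j = k then 1 else 0)" if "j < length ?XX" for j
    using that k_unique by (simp add: coev_def)
  have twist_col: "mcomp ?XX (twist_id q \<beta> ?X) (coev ?X) i 0 = (if i = k then \<beta> else 0)" for i
  proof -
    have "mcomp ?XX (twist_id q \<beta> ?X) (coev ?X) i 0 = twist_id q \<beta> ?X i k * 1"
      by (rule mcomp_single_column[OF k_XX]) (rule coev_col)
    also have "\<dots> = (if i = k then \<beta> else 0)"
      using k(1) by (simp add: twist_id_def)
    finally show ?thesis .
  qed
  have braid_col: "mcomp ?XX (braid \<sigma> q \<alpha> ?X (dual ?X)) (mcomp ?XX (twist_id q \<beta> ?X) (coev ?X)) i 0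
      = (if i = k then \<alpha> * q 0 * \<beta> else 0)" for i
  proof -
    have "mcomp ?XX (braid \<sigma> q \<alpha> ?X (dual ?X)) (mcomp ?XX (twist_id q \<beta> ?X) (coev ?X)) i 0
        = braid \<sigma> q \<alpha> ?X (dual ?X) i k * \<beta>"
      by (rule mcomp_single_column[OF k_XX]) (rule twist_col)
    also have "\<dots> = (if i = k then \<alpha> * q 0 * \<beta> else 0)"
      using k by simp
    finally show ?thesis .
  qed
  have "qdim \<sigma> \<epsilon> q \<alpha> \<beta> ?X = ev \<epsilon> ?X 0 k * (\<alpha> * q 0 * \<beta>)"
    unfolding qdim_def by (rule mcomp_single_column) (use k_XX braid_col in simp_all)
  also have "\<dots> = \<epsilon> * complex_of_real (sqrt (real (card (UNIV :: 'g set)))) * \<alpha> * q 0 * \<beta>"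
    using k by (simp add: ev_def mult.assoc)
  finally show ?thesis .
qed

lemma bimultiplicative_zero:
  fixes \<sigma> :: "'g::monoid_add \<Rightarrow> 'g \<Rightarrow> 'c::field"
  assumes "\<sigma> 0 c \<noteq> 0" and "\<And>a b c. \<sigma> (a + b) c = \<sigma> a c * \<sigma> b c"
  shows "\<sigma> 0 c = 1"
  using assms(2)[of 0 0 c] assms(1) by simp

lemma quadratic_zero:
  fixes q :: "'g::monoid_add \<Rightarrow> 'c::field"
  assumes "q 0 \<noteq> 0" and "\<sigma> 0 0 = 1"
    and "\<And>a b. \<sigma> a b = q (a + b) * inverse (q a) * inverse (q b)"
  shows "q 0 = 1"
  using assms(3)[of 0 0] assms(1,2) by (simp add: field_simps)

lemma bilinear_neg_diag_quadratic:
  fixes q :: "'g::ab_group_add \<Rightarrow> 'c::field"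
  assumes "q a \<noteq> 0" and "q 0 = 1" and "q (- a) = q a"
    and "\<And>a b. \<sigma> a b = q (a + b) * inverse (q a) * inverse (q b)"
  shows "\<sigma> a (- a) * q a ^ 2 = 1"
  using assms(4)[of a "- a"] assms(1-3) by (simp add: field_simps power2_eq_square)

theorem proposition3p7:
  fixes \<sigma> :: "'g::{finite,ab_group_add} \<Rightarrow> 'g \<Rightarrow> complex"
    and q :: "'g \<Rightarrow> complex"
    and \<epsilon> \<alpha> \<beta> :: complex
  assumes sigma_nz: "\<And>a b. \<sigma> a b \<noteq> 0"
    and sigma_sym: "\<And>a b. \<sigma> a b = \<sigma> b a"
    and sigma_bimult: "\<And>a b c. \<sigma> (a + b) c = \<sigma> a c * \<sigma> b c"
    and sigma_nondeg: "\<And>a. (\<forall>b. \<sigma> a b = 1) \<Longrightarrow> a = 0"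
    and eps: "\<epsilon> = 1 \<or> \<epsilon> = -1"
    and q_nz: "\<And>a. q a \<noteq> 0"
    and q_even: "\<And>a. q (- a) = q a"
    and q_sigma: "\<And>a b. \<sigma> a b = q (a + b) * inverse (q a) * inverse (q b)"
    and alpha: "\<alpha> ^ 2 = \<epsilon> * inverse (complex_of_real (sqrt (real (card (UNIV :: 'g set)))))
                           * (\<Sum>a\<in>UNIV. inverse (q a))"
    and beta: "\<beta> = inverse \<alpha> \<or> \<beta> = - inverse \<alpha>"
  shows "(\<forall>Y::'g simple. qdim \<sigma> \<epsilon> q \<alpha> \<beta> Y = complex_of_real (fpdim Y))
           \<longleftrightarrow> \<alpha> * \<beta> = \<epsilon>"
proof -
  define s where "s = complex_of_real (sqrt (real (card (UNIV :: 'g set))))"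
  have "\<sigma> 0 0 = 1"
    by (rule bimultiplicative_zero[where \<sigma> = \<sigma>, OF sigma_nz sigma_bimult])
  then have q0: "q 0 = 1"
    by (rule quadratic_zero[where \<sigma> = \<sigma>, OF q_nz _ q_sigma])
  have qdim_C_eq: "qdim \<sigma> \<epsilon> q \<alpha> \<beta> (C a) = 1" for a
    unfolding qdim_C
    by (rule bilinear_neg_diag_quadratic[where \<sigma> = \<sigma> and a = a, OF q_nz q0 q_even q_sigma])
  have "s \<noteq> 0"
    unfolding s_def by simp
  have "(\<forall>Y::'g simple. qdim \<sigma> \<epsilon> q \<alpha> \<beta> Y = complex_of_real (fpdim Y))
        \<longleftrightarrow> qdim \<sigma> \<epsilon> q \<alpha> \<beta> X = complex_of_real (fpdim (X :: 'g simple))"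
    by (metis simple.exhaust fpdim.simps(1) of_real_1 qdim_C_eq)
  also have "\<dots> \<longleftrightarrow> s * (\<epsilon> * \<alpha> * \<beta>) = s"
    by (simp add: qdim_X q0 s_def ac_simps)
  also have "\<dots> \<longleftrightarrow> \<epsilon> * \<alpha> * \<beta> = 1"
    using \<open>s \<noteq> 0\<close> by simp
  also have "\<dots> \<longleftrightarrow> \<alpha> * \<beta> = \<epsilon>"
    using eps by (auto simp: minus_equation_iff)
  finally show ?thesis .
qed

end
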